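(* Let $q\ge 2$ be an integer, $s\in(0,2)$, and let $P(x,t)=|\Psi(x,t)|^2$ be as in the context. Put $\langle x\rangle(t)=\int_0^\pi x\,P(x,t)\,dx$. If $q$ is even, then $$\langle x\rangle(t)=\frac{\pi}{2}-\frac{16}{\pi}\big(1-q^{2(s-2)}\big)\sum_{k=1}^{\infty}\frac{q^{k(s-1)}}{(q^{2k}-1)^2}\cos\big((q^{2k}-1)t\big),$$ and $\langle x\rangle$ is continuously differentiable, with $$\frac{d\langle x\rangle}{dt}(t)=\frac{16}{\pi}\big(1-q^{2(s-2)}\big)\sum_{k=1}^\infty\frac{q^{k(s-1)}}{q^{2k}-1}\sin\big((q^{2k}-1)t\big),$$ an absolutely and uniformly convergent series. If $q$ is odd, then $\langle x\rangle(t)=\pi/2$ for all $t$.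
   Context: For an integer $q\ge2$ and $s\in(0,2)$ define, for $x\in[0,\pi]$ and $t\in\mathbb R$, $$\Psi(x,t)=N\sum_{n=0}^{\infty} q^{n(s-2)}\sin(q^n x)\,e^{-i q^{2n} t},\qquad N=\sqrt{\tfrac{2}{\pi}\big(1-q^{2(s-2)}\big)},$$ and let $P(x,t)=|\Psi(x,t)|^2$. *)

theory Defs
  imports "HOL-Analysis.Analysis"
begin

definition normN :: "nat \<Rightarrow> real \<Rightarrow> real" where
  "normN q s = sqrt (2 / pi * (1 - real q powr (2 * (s - 2))))"

definition Psi :: "nat \<Rightarrow> real \<Rightarrow> real \<Rightarrow> real \<Rightarrow> complex" where
  "Psi q s x t = complex_of_real (normN q s) *
     (\<Sum>n. complex_of_real (real q powr (real n * (s - 2)) * sin (real q ^ n * x))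
           * exp (- \<i> * complex_of_real (real q ^ (2 * n) * t)))"

definition Pdens :: "nat \<Rightarrow> real \<Rightarrow> real \<Rightarrow> real \<Rightarrow> real" where
  "Pdens q s x t = (cmod (Psi q s x t))\<^sup>2"

definition avgx :: "nat \<Rightarrow> real \<Rightarrow> real \<Rightarrow> real" where
  "avgx q s t = integral {0..pi} (\<lambda>x. x * Pdens q s x t)"

end

theory Submission
  imports Defs
begin

(* Expanding |Psi|^2 as a double series gives
     <x>(t) = N^2 * sum_{m,n} r^(m+n) cos((q^(2m) - q^(2n)) t) J(q^m, q^n),
   where r = q^(s-2) and J(j,k) is the integral of x sin(jx) sin(kx) over [0,pi]; summation and
   integration commute by dominated convergence, as the partial sums of Psi are bounded by sum r^n.
   Now J(j,j) = pi^2/4, J(j,k) = 0 if j <> k and j + k is even, and J(j,k) = -4jk/(j^2-k^2)^2 if j + k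
   is odd.  For odd q all q^n are odd, so only the diagonal survives, and it sums to
   N^2 (pi^2/4) / (1 - r^2) = pi/2.  For even q, q^m + q^n is odd exactly when one of m, n is 0, and
   this first row and column produce the cosine series.  Its termwise derivative is dominated by
   sum q^(k(s-1)) / (q^(2k) - 1) = O(sum q^(k(s-3))), so the Weierstrass M-test justifies
   differentiating termwise. *)

definition x_cos_moment :: "int \<Rightarrow> real" where
  "x_cos_moment L = (if L = 0 then pi\<^sup>2 / 2 else if even L then 0 else - 2 / (of_int L)\<^sup>2)"

lemma has_integral_x_cos: "((\<lambda>x. x * cos (of_int L * x)) has_integral x_cos_moment L) {0..pi}"
proof -
  define F :: "real \<Rightarrow> real" where
    "F x = (if L = 0 then x\<^sup>2 / 2 else x * sin (of_int L * x) / of_int L + cos (of_int L * x) / (of_int L)\<^sup>2)" for x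
  have "((\<lambda>x. x * cos (of_int L * x)) has_integral (F pi - F 0)) {0..pi}"
  proof (rule fundamental_theorem_of_calculus)
    fix x assume "x \<in> {0..pi}"
    have "(F has_real_derivative x * cos (of_int L * x)) (at x within {0..pi})"
      unfolding F_def by (cases "L = 0") (auto intro!: derivative_eq_intros simp: field_simps power2_eq_square)
    then show "(F has_vector_derivative x * cos (of_int L * x)) (at x within {0..pi})"
      by (simp add: has_real_derivative_iff_has_vector_derivative)
  qed simp
  moreover have "F pi - F 0 = x_cos_moment L"
    using sin_npi_int[of L] cos_npi_int[of L]
    by (auto simp: F_def x_cos_moment_def mult.commute field_simps)
  ultimately show ?thesis by simp
qed

definition x_sin_sin_moment :: "nat \<Rightarrow> nat \<Rightarrow> real" where
  "x_sin_sin_moment j k = (x_cos_moment (int j - int k) - x_cos_moment (int j + int k)) / 2"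

lemma has_integral_x_sin_sin:
  "((\<lambda>x. x * (sin (real j * x) * sin (real k * x))) has_integral x_sin_sin_moment j k) {0..pi}"
proof -
  have "(\<lambda>x. x * (sin (real j * x) * sin (real k * x))) =
      (\<lambda>x. (x * cos (of_int (int j - int k) * x) - x * cos (of_int (int j + int k) * x)) / 2)"
    by (auto simp: sin_times_sin algebra_simps fun_eq_iff)
  moreover have "((\<lambda>x. (x * cos (of_int (int j - int k) * x) - x * cos (of_int (int j + int k) * x)) / 2)
      has_integral x_sin_sin_moment j k) {0..pi}"
    unfolding x_sin_sin_moment_def by (intro has_integral_divide has_integral_diff has_integral_x_cos)
  ultimately show ?thesis by simp
qed

lemma x_sin_sin_moment_diag: "j \<noteq> 0 \<Longrightarrow> x_sin_sin_moment j j = pi\<^sup>2 / 4"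
  by (simp add: x_sin_sin_moment_def x_cos_moment_def)

lemma x_sin_sin_moment_commute: "x_sin_sin_moment j k = x_sin_sin_moment k j"
  by (simp add: x_sin_sin_moment_def x_cos_moment_def add.commute power2_commute)

lemma x_sin_sin_moment_even: "j \<noteq> k \<Longrightarrow> even (j + k) \<Longrightarrow> x_sin_sin_moment j k = 0"
  by (auto simp: x_sin_sin_moment_def x_cos_moment_def)

lemma x_sin_sin_moment_odd:
  assumes "odd (j + k)"
  shows "x_sin_sin_moment j k = - 4 * real j * real k / ((real j)\<^sup>2 - (real k)\<^sup>2)\<^sup>2"
proof -
  have nz: "real j - real k \<noteq> 0" "real j + real k \<noteq> 0"
    using assms by (auto simp flip: of_nat_add)
  have "odd (int j - int k)" "odd (int j + int k)"
    using assms by auto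
  then have "x_sin_sin_moment j k = 1 / (real j + real k)\<^sup>2 - 1 / (real j - real k)\<^sup>2"
    using nz by (auto simp: x_sin_sin_moment_def x_cos_moment_def)
  also have "\<dots> = ((real j - real k)\<^sup>2 - (real j + real k)\<^sup>2) / ((real j - real k) * (real j + real k))\<^sup>2"
    using nz by (simp add: divide_simps)
  also have "\<dots> = - 4 * real j * real k / ((real j)\<^sup>2 - (real k)\<^sup>2)\<^sup>2"
    by (simp add: power2_eq_square algebra_simps)
  finally show ?thesis .
qed

lemma norm_sum_sin_exp_squared:
  fixes a \<omega> E :: "nat \<Rightarrow> real"
  shows "(cmod (\<Sum>n\<in>N. complex_of_real (a n * sin (\<omega> n * x)) * exp (- \<i> * complex_of_real (E n * t))))\<^sup>2
    = (\<Sum>m\<in>N. \<Sum>n\<in>N. a m * a n * cos ((E m - E n) * t) * (sin (\<omega> m * x) * sin (\<omega> n * x)))"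
proof -
  define f where "f n = complex_of_real (a n * sin (\<omega> n * x)) * exp (- \<i> * complex_of_real (E n * t))" for n
  have "(cmod (\<Sum>n\<in>N. f n))\<^sup>2 = Re ((\<Sum>m\<in>N. f m) * cnj (\<Sum>n\<in>N. f n))"
    by (simp only: complex_norm_square[symmetric] Re_complex_of_real)
  also have "\<dots> = (\<Sum>m\<in>N. \<Sum>n\<in>N. Re (f m * cnj (f n)))"
    by (simp add: cnj_sum sum_product Re_sum)
  also have "\<dots> = (\<Sum>m\<in>N. \<Sum>n\<in>N. a m * a n * cos ((E m - E n) * t) * (sin (\<omega> m * x) * sin (\<omega> n * x)))"
    by (intro sum.cong refl) (simp add: f_def Re_exp Im_exp cos_diff left_diff_distrib algebra_simps)
  finally show ?thesis
    by (simp only: f_def)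
qed

lemma double_sum_tendsto_integral_x_norm_superposition:
  fixes a E :: "nat \<Rightarrow> real" and k :: "nat \<Rightarrow> nat" and t :: real
  assumes summable: "summable (\<lambda>n. \<bar>a n\<bar>)"
  shows "(\<lambda>K. \<Sum>m<K. \<Sum>n<K. a m * a n * cos ((E m - E n) * t) * x_sin_sin_moment (k m) (k n))
    \<longlonglongrightarrow> integral {0..pi} (\<lambda>x. x * (cmod (\<Sum>n. complex_of_real (a n * sin (real (k n) * x))
                                         * exp (- \<i> * complex_of_real (E n * t))))\<^sup>2)"
proof -
  define f where "f n x = complex_of_real (a n * sin (real (k n) * x)) * exp (- \<i> * complex_of_real (E n * t))"
    for n x
  define A where "A = (\<Sum>n. \<bar>a n\<bar>)"
  have norm_f: "norm (f n x) \<le> \<bar>a n\<bar>" for n x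
    by (simp add: f_def norm_mult abs_mult mult_left_le)
  have summable_f: "summable (\<lambda>n. f n x)" for x
    by (rule summable_comparison_test[OF _ summable]) (auto intro: norm_f)
  have partial_bound: "norm (\<Sum>n<K. f n x) \<le> A" for K x
  proof -
    have "norm (\<Sum>n<K. f n x) \<le> (\<Sum>n<K. \<bar>a n\<bar>)"
      by (rule order_trans[OF norm_sum sum_mono[OF norm_f]])
    also have "\<dots> \<le> A"
      unfolding A_def by (rule sum_le_suminf[OF summable]) auto
    finally show ?thesis .
  qed
  have expand: "x * (cmod (\<Sum>n<K. f n x))\<^sup>2 =
      (\<Sum>m<K. \<Sum>n<K. a m * a n * cos ((E m - E n) * t) * (x * (sin (real (k m) * x) * sin (real (k n) * x))))"
    for K x
    unfolding f_def norm_sum_sin_exp_squared by (simp add: sum_distrib_left mult.left_commute)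
  have partial_integral: "((\<lambda>x. x * (cmod (\<Sum>n<K. f n x))\<^sup>2) has_integral
      (\<Sum>m<K. \<Sum>n<K. a m * a n * cos ((E m - E n) * t) * x_sin_sin_moment (k m) (k n))) {0..pi}" for K
    unfolding expand by (intro has_integral_sum has_integral_mult_right has_integral_x_sin_sin finite_lessThan)
  have "(\<lambda>K. integral {0..pi} (\<lambda>x. x * (cmod (\<Sum>n<K. f n x))\<^sup>2))
      \<longlonglongrightarrow> integral {0..pi} (\<lambda>x. x * (cmod (\<Sum>n. f n x))\<^sup>2)"
  proof (rule dominated_convergence(2))
    show "(\<lambda>x. x * (cmod (\<Sum>n<K. f n x))\<^sup>2) integrable_on {0..pi}" for K
      using partial_integral by blast
    show "(\<lambda>_. pi * A\<^sup>2) integrable_on {0..pi}"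
      by (rule integrable_const_ivl)
    show "norm (x * (cmod (\<Sum>n<K. f n x))\<^sup>2) \<le> pi * A\<^sup>2" if "x \<in> {0..pi}" for K x
      using that partial_bound[where K = K and x = x]
      by (auto simp: abs_mult intro!: mult_mono power_mono)
    show "(\<lambda>K. x * (cmod (\<Sum>n<K. f n x))\<^sup>2) \<longlonglongrightarrow> x * (cmod (\<Sum>n. f n x))\<^sup>2" for x
      by (intro tendsto_intros summable_LIMSEQ summable_f)
  qed
  then show ?thesis
    unfolding integral_unique[OF partial_integral] by (simp only: f_def)
qed

lemma sum_sum_diagonal_first_row:
  fixes g :: "nat \<Rightarrow> nat \<Rightarrow> 'a::comm_semiring_1"
  assumes sym: "\<And>m n. g m n = g n m"
    and vanish: "\<And>m n. m \<noteq> n \<Longrightarrow> m \<noteq> 0 \<Longrightarrow> n \<noteq> 0 \<Longrightarrow> g m n = 0"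
  shows "(\<Sum>m<K. \<Sum>n<K. g m n) = (\<Sum>n<K. g n n) + 2 * (\<Sum>n\<in>{1..<K}. g 0 n)"
proof (induction K)
  case 0
  then show ?case by simp
next
  case (Suc K)
  have "(\<Sum>n<K. g K n) = (\<Sum>n<K. if n = 0 then g 0 K else 0)"
    using sym vanish by (intro sum.cong) auto
  then have new_row: "(\<Sum>n<K. g K n) = (if K = 0 then 0 else g 0 K)"
    by simp
  have new_column: "(\<Sum>m<K. g m K) = (\<Sum>n<K. g K n)"
    using sym by simp
  show ?case
    using Suc new_row new_column
    by (simp add: sum.distrib mult_2 algebra_simps)
qed

lemma uniform_limit_sin_series:
  fixes d \<omega> :: "nat \<Rightarrow> real"
  assumes "summable (\<lambda>k. \<bar>d k\<bar>)"
  shows "uniform_limit UNIV (\<lambda>n t. \<Sum>k<n. d k * sin (\<omega> k * t)) (\<lambda>t. \<Sum>k. d k * sin (\<omega> k * t)) sequentially"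
  by (rule Weierstrass_m_test[OF _ assms]) (simp add: abs_mult mult_left_le)

lemma continuous_on_sin_series:
  fixes d \<omega> :: "nat \<Rightarrow> real"
  assumes "summable (\<lambda>k. \<bar>d k\<bar>)"
  shows "continuous_on UNIV (\<lambda>t. \<Sum>k. d k * sin (\<omega> k * t))"
  by (rule uniform_limit_theorem[OF _ uniform_limit_sin_series[OF assms]])
    (auto intro!: always_eventually continuous_intros)

lemma has_real_derivative_cos_series:
  fixes c \<omega> :: "nat \<Rightarrow> real"
  assumes "summable (\<lambda>k. \<bar>c k\<bar>)" and "summable (\<lambda>k. \<bar>c k * \<omega> k\<bar>)"
  shows "((\<lambda>t. \<Sum>k. c k * cos (\<omega> k * t)) has_real_derivative - (\<Sum>k. c k * \<omega> k * sin (\<omega> k * t))) (at t)"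
proof -
  have "((\<lambda>t. \<Sum>k. c k * cos (\<omega> k * t)) has_real_derivative (\<Sum>k. - (c k * \<omega> k * sin (\<omega> k * t)))) (at t)"
  proof (rule has_field_derivative_series'(2)[of UNIV _ _ 0])
    show "((\<lambda>t. c k * cos (\<omega> k * t)) has_real_derivative - (c k * \<omega> k * sin (\<omega> k * t))) (at t within UNIV)"
      for k t by (auto intro!: derivative_eq_intros)
    show "uniformly_convergent_on UNIV (\<lambda>n t. \<Sum>k<n. - (c k * \<omega> k * sin (\<omega> k * t)))"
      by (rule Weierstrass_m_test'[OF _ assms(2)]) (simp add: abs_mult mult_left_le)
    show "summable (\<lambda>k. c k * cos (\<omega> k * 0))"
      using summable_rabs_cancel[OF assms(1)] by simp
  qed auto
  moreover have "summable (\<lambda>k. c k * \<omega> k * sin (\<omega> k * t))"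
    by (rule summable_comparison_test[OF _ assms(2)]) (simp add: abs_mult mult_left_le)
  ultimately show ?thesis
    by (simp add: suminf_minus)
qed

lemma summable_powr_div_pow_minus_one:
  fixes b \<sigma> :: real
  assumes b: "1 < b" and \<sigma>: "\<sigma> < 2"
  shows "summable (\<lambda>k. \<bar>b powr (real (Suc k) * \<sigma>) / (b ^ (2 * Suc k) - 1)\<bar>)"
proof (rule summable_comparison_test)
  define \<rho> where "\<rho> = b powr (\<sigma> - 2)"
  have \<rho>: "0 < \<rho>" "\<rho> < 1"
    using b \<sigma> by (auto simp: \<rho>_def powr_less_one)
  show "summable (\<lambda>k. \<rho> ^ Suc k * (b\<^sup>2 / (b\<^sup>2 - 1)))"
    using \<rho> by (intro summable_mult2 summable_mult summable_geometric) auto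
  show "\<exists>N. \<forall>k\<ge>N. norm \<bar>b powr (real (Suc k) * \<sigma>) / (b ^ (2 * Suc k) - 1)\<bar> \<le> \<rho> ^ Suc k * (b\<^sup>2 / (b\<^sup>2 - 1))"
  proof (intro exI allI impI)
    fix k :: nat
    define B where "B = b ^ (2 * Suc k)"
    have "b\<^sup>2 \<le> B"
      unfolding B_def using b by (intro power_increasing) auto
    moreover have "1 < b\<^sup>2"
      using b by (simp add: one_less_power)
    ultimately have ratio: "B / (B - 1) \<le> b\<^sup>2 / (b\<^sup>2 - 1)"
      by (simp add: divide_simps) (simp add: algebra_simps)
    have "b powr (real (Suc k) * \<sigma>) = b powr (real (Suc k) * (\<sigma> - 2)) * b powr real (2 * Suc k)"
      by (simp add: powr_add[symmetric] algebra_simps)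
    also have "\<dots> = \<rho> ^ Suc k * B"
      using b by (simp add: \<rho>_def B_def powr_power powr_realpow del: of_nat_Suc power_Suc of_nat_mult)
    finally have "b powr (real (Suc k) * \<sigma>) = \<rho> ^ Suc k * B" .
    then have "norm \<bar>b powr (real (Suc k) * \<sigma>) / (B - 1)\<bar> = \<rho> ^ Suc k * (B / (B - 1))"
      using \<open>1 < b\<^sup>2\<close> \<open>b\<^sup>2 \<le> B\<close> \<rho> by simp
    also have "\<dots> \<le> \<rho> ^ Suc k * (b\<^sup>2 / (b\<^sup>2 - 1))"
      using ratio \<rho> by (intro mult_left_mono) auto
    finally show "norm \<bar>b powr (real (Suc k) * \<sigma>) / (b ^ (2 * Suc k) - 1)\<bar> \<le> \<rho> ^ Suc k * (b\<^sup>2 / (b\<^sup>2 - 1))"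
      by (simp add: B_def)
  qed
qed

lemma summable_powr_div_pow_minus_one_squared:
  fixes b \<sigma> :: real
  assumes b: "1 < b" and \<sigma>: "\<sigma> < 2"
  shows "summable (\<lambda>k. \<bar>b powr (real (Suc k) * \<sigma>) / (b ^ (2 * Suc k) - 1)\<^sup>2\<bar>)"
proof (rule summable_comparison_test[OF _ summable_divide[OF summable_powr_div_pow_minus_one[OF assms]]])
  show "\<exists>N. \<forall>k\<ge>N. norm \<bar>b powr (real (Suc k) * \<sigma>) / (b ^ (2 * Suc k) - 1)\<^sup>2\<bar>
      \<le> \<bar>b powr (real (Suc k) * \<sigma>) / (b ^ (2 * Suc k) - 1)\<bar> / (b\<^sup>2 - 1)"
  proof (intro exI allI impI)
    fix k :: nat
    define B where "B = b ^ (2 * Suc k)"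
    have "b\<^sup>2 \<le> B"
      unfolding B_def using b by (intro power_increasing) auto
    moreover have "1 < b\<^sup>2"
      using b by (simp add: one_less_power)
    ultimately show "norm \<bar>b powr (real (Suc k) * \<sigma>) / (b ^ (2 * Suc k) - 1)\<^sup>2\<bar>
        \<le> \<bar>b powr (real (Suc k) * \<sigma>) / (b ^ (2 * Suc k) - 1)\<bar> / (b\<^sup>2 - 1)"
      unfolding B_def[symmetric] by (simp add: power2_eq_square divide_simps mult_left_mono)
  qed
qed

lemma cos_diff_mult_commute: "cos ((a - b) * t) = cos ((b - a) * t)"
  by (metis cos_minus minus_diff_eq mult_minus_left)

definition avgx_term :: "nat \<Rightarrow> real \<Rightarrow> real \<Rightarrow> nat \<Rightarrow> nat \<Rightarrow> real" where
  "avgx_term q s t m n = real q powr (real m * (s - 2)) * real q powr (real n * (s - 2))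
     * cos ((real q ^ (2 * m) - real q ^ (2 * n)) * t) * x_sin_sin_moment (q ^ m) (q ^ n)"

lemma avgx_term_double_sum_tendsto_avgx:
  assumes "2 \<le> q" and "s < 2"
  shows "(\<lambda>K. (normN q s)\<^sup>2 * (\<Sum>m<K. \<Sum>n<K. avgx_term q s t m n)) \<longlonglongrightarrow> avgx q s t"
proof -
  define r where "r = real q powr (s - 2)"
  have r: "0 < r" "r < 1"
    using assms by (auto simp: r_def powr_less_one)
  have a_eq: "real q powr (real n * (s - 2)) = r ^ n" for n
    using assms by (simp add: r_def powr_power)
  have "summable (\<lambda>n. \<bar>real q powr (real n * (s - 2))\<bar>)"
    using r by (simp add: a_eq summable_geometric)
  from double_sum_tendsto_integral_x_norm_superposition[OF this, where k = "\<lambda>n. q ^ n" and E = "\<lambda>n. real q ^ (2 * n)" and t = t]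
  have "(\<lambda>K. \<Sum>m<K. \<Sum>n<K. avgx_term q s t m n) \<longlonglongrightarrow>
      integral {0..pi} (\<lambda>x. x * (cmod (\<Sum>n. complex_of_real (real q powr (real n * (s - 2)) * sin (real q ^ n * x))
        * exp (- \<i> * complex_of_real (real q ^ (2 * n) * t))))\<^sup>2)"
    by (simp add: avgx_term_def)
  then have "(\<lambda>K. (normN q s)\<^sup>2 * (\<Sum>m<K. \<Sum>n<K. avgx_term q s t m n)) \<longlonglongrightarrow>
      integral {0..pi} (\<lambda>x. (normN q s)\<^sup>2 * (x * (cmod (\<Sum>n. complex_of_real (real q powr (real n * (s - 2)) * sin (real q ^ n * x))
        * exp (- \<i> * complex_of_real (real q ^ (2 * n) * t))))\<^sup>2))"
    unfolding integral_mult_right by (rule tendsto_mult_left)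
  then show ?thesis
    by (simp add: avgx_def Pdens_def Psi_def norm_mult power_mult_distrib algebra_simps)
qed

lemma avgx_term_commute: "avgx_term q s t m n = avgx_term q s t n m"
  by (simp add: avgx_term_def x_sin_sin_moment_commute cos_diff_mult_commute[of "real q ^ (2 * m)"])

lemma avgx_term_off_diagonal:
  assumes "1 < q" and "m \<noteq> n" and "m \<noteq> 0" and "n \<noteq> 0"
  shows "avgx_term q s t m n = 0"
proof -
  have "q ^ m \<noteq> q ^ n"
    using assms by (simp add: power_inject_exp)
  moreover have "even (q ^ m + q ^ n)"
    using assms by (cases "even q") auto
  ultimately show ?thesis
    by (simp add: avgx_term_def x_sin_sin_moment_even)
qed

lemma avgx_term_diagonal:
  assumes "0 < q"
  shows "avgx_term q s t n n = (real q powr (2 * (s - 2))) ^ n * pi\<^sup>2 / 4"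
proof -
  have "real q powr (real n * (s - 2)) * real q powr (real n * (s - 2)) = (real q powr (2 * (s - 2))) ^ n"
    using assms by (simp add: powr_power powr_add[symmetric] algebra_simps)
  then show ?thesis
    using assms by (simp add: avgx_term_def x_sin_sin_moment_diag)
qed

lemma avgx_term_first_row:
  assumes "2 \<le> q"
  shows "avgx_term q s t 0 (Suc k) = (if even q then - 4 * (real q powr (real (Suc k) * (s - 1))
    / (real q ^ (2 * Suc k) - 1)\<^sup>2) * cos ((real q ^ (2 * Suc k) - 1) * t) else 0)"
proof (cases "even q")
  case True
  define X where "X = real q ^ (2 * Suc k)"
  have "(real q ^ Suc k)\<^sup>2 = X"
    by (simp only: X_def power_even_eq)
  then have moment: "x_sin_sin_moment 1 (q ^ Suc k) = - 4 * real q ^ Suc k / (X - 1)\<^sup>2"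
    using True x_sin_sin_moment_odd[of 1 "q ^ Suc k"] by (simp add: power2_commute)
  have powr_eq: "real q powr (real (Suc k) * (s - 2)) * real q ^ Suc k = real q powr (real (Suc k) * (s - 1))"
  proof -
    have "real q powr (real (Suc k) * (s - 2)) * real q ^ Suc k
        = real q powr (real (Suc k) * (s - 2)) * real q powr real (Suc k)"
      using assms by (simp only: powr_realpow)
    also have "\<dots> = real q powr (real (Suc k) * (s - 1))"
      by (simp add: powr_add[symmetric] algebra_simps)
    finally show ?thesis .
  qed
  have "avgx_term q s t 0 (Suc k)
      = real q powr (real (Suc k) * (s - 2)) * cos ((1 - X) * t) * x_sin_sin_moment 1 (q ^ Suc k)"
    by (simp add: avgx_term_def X_def)
  also have "\<dots> = - 4 * (real q powr (real (Suc k) * (s - 2)) * real q ^ Suc k / (X - 1)\<^sup>2) * cos ((X - 1) * t)"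
    unfolding moment cos_diff_mult_commute[of 1] by simp
  finally show ?thesis
    using True by (simp only: powr_eq X_def if_True)
next
  case False
  have "1 \<noteq> q ^ Suc k"
    using assms one_less_power[of q "Suc k"] by simp
  moreover have "even (1 + q ^ Suc k)"
    using False by simp
  ultimately show ?thesis
    using False by (simp add: avgx_term_def x_sin_sin_moment_even del: power_Suc)
qed

lemma avgx_term_first_row_sums:
  assumes "2 \<le> q" and "s < 2"
  shows "(\<lambda>k. avgx_term q s t 0 (Suc k)) sums ((if even q then - 4 else 0) *
    (\<Sum>k. real q powr (real (Suc k) * (s - 1)) / (real q ^ (2 * Suc k) - 1)\<^sup>2 * cos ((real q ^ (2 * Suc k) - 1) * t)))"
proof -
  have "summable (\<lambda>k. \<bar>real q powr (real (Suc k) * (s - 1)) / (real q ^ (2 * Suc k) - 1)\<^sup>2\<bar>)"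
    using assms by (intro summable_powr_div_pow_minus_one_squared) auto
  then have "summable (\<lambda>k. real q powr (real (Suc k) * (s - 1)) / (real q ^ (2 * Suc k) - 1)\<^sup>2
      * cos ((real q ^ (2 * Suc k) - 1) * t))"
    by (rule summable_comparison_test') (simp add: abs_mult divide_right_mono mult_left_le)
  moreover have "avgx_term q s t 0 (Suc k) = (if even q then - 4 else 0) *
      (real q powr (real (Suc k) * (s - 1)) / (real q ^ (2 * Suc k) - 1)\<^sup>2 * cos ((real q ^ (2 * Suc k) - 1) * t))" for k
    by (simp add: avgx_term_first_row[OF assms(1)])
  ultimately show ?thesis
    by (simp only: sums_mult summable_sums)
qed

lemma avgx_term_double_sum_tendsto:
  assumes "2 \<le> q" and "s < 2"
  shows "(\<lambda>K. \<Sum>m<K. \<Sum>n<K. avgx_term q s t m n)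
    \<longlonglongrightarrow> pi\<^sup>2 / 4 / (1 - real q powr (2 * (s - 2))) + 2 * (\<Sum>k. avgx_term q s t 0 (Suc k))"
proof -
  define \<rho> where "\<rho> = real q powr (2 * (s - 2))"
  have \<rho>: "0 < \<rho>" "\<rho> < 1"
    using assms by (auto simp: \<rho>_def powr_less_one)
  have split: "(\<Sum>m<K. \<Sum>n<K. avgx_term q s t m n)
      = (\<Sum>n<K. \<rho> ^ n * pi\<^sup>2 / 4) + 2 * (\<Sum>n\<in>{1..<K}. avgx_term q s t 0 n)" for K
  proof -
    have "(\<Sum>m<K. \<Sum>n<K. avgx_term q s t m n)
        = (\<Sum>n<K. avgx_term q s t n n) + 2 * (\<Sum>n\<in>{1..<K}. avgx_term q s t 0 n)"
      using assms by (intro sum_sum_diagonal_first_row avgx_term_commute avgx_term_off_diagonal) auto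
    moreover have "avgx_term q s t n n = \<rho> ^ n * pi\<^sup>2 / 4" for n
      using assms by (simp add: avgx_term_diagonal \<rho>_def)
    ultimately show ?thesis
      by simp
  qed
  have "(\<lambda>n. \<rho> ^ n * (pi\<^sup>2 / 4)) sums (1 / (1 - \<rho>) * (pi\<^sup>2 / 4))"
    using \<rho> by (intro sums_mult2 geometric_sums) simp
  then have diagonal: "(\<lambda>K. \<Sum>n<K. \<rho> ^ n * pi\<^sup>2 / 4) \<longlonglongrightarrow> pi\<^sup>2 / 4 / (1 - \<rho>)"
    by (simp add: sums_def mult_ac)
  have summable_row: "summable (\<lambda>k. avgx_term q s t 0 (Suc k))"
    using avgx_term_first_row_sums[OF assms] by (rule sums_summable)
  have shift: "(\<Sum>n\<in>{1..<Suc K}. avgx_term q s t 0 n) = (\<Sum>k<K. avgx_term q s t 0 (Suc k))" for K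
    by (simp only: One_nat_def sum.shift_bounds_Suc_ivl atLeast0LessThan)
  have first_row: "(\<lambda>K. \<Sum>n\<in>{1..<K}. avgx_term q s t 0 n) \<longlonglongrightarrow> (\<Sum>k. avgx_term q s t 0 (Suc k))"
    by (rule LIMSEQ_imp_Suc) (simp only: shift summable_LIMSEQ[OF summable_row])
  show ?thesis
    unfolding split \<rho>_def[symmetric] by (intro tendsto_add tendsto_mult_left diagonal first_row)
qed

lemma avgx_eq_cos_series:
  assumes "2 \<le> q" and "s < 2"
  shows "avgx q s t = pi / 2 - 16 / pi * (1 - real q powr (2 * (s - 2))) *
    (if even q then (\<Sum>k. real q powr (real (Suc k) * (s - 1)) / (real q ^ (2 * Suc k) - 1)\<^sup>2
                     * cos ((real q ^ (2 * Suc k) - 1) * t)) else 0)"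
proof -
  define \<rho> where "\<rho> = real q powr (2 * (s - 2))"
  define S where "S = (\<Sum>k. real q powr (real (Suc k) * (s - 1)) / (real q ^ (2 * Suc k) - 1)\<^sup>2
                     * cos ((real q ^ (2 * Suc k) - 1) * t))"
  have \<rho>: "0 < \<rho>" "\<rho> < 1"
    using assms by (auto simp: \<rho>_def powr_less_one)
  have norm_sq: "(normN q s)\<^sup>2 = 2 / pi * (1 - \<rho>)"
    using \<rho> by (simp add: normN_def \<rho>_def)
  have row: "(\<Sum>k. avgx_term q s t 0 (Suc k)) = (if even q then - 4 else 0) * S"
    unfolding S_def using avgx_term_first_row_sums[OF assms] by (rule sums_unique[symmetric])
  have "(\<lambda>K. (normN q s)\<^sup>2 * (\<Sum>m<K. \<Sum>n<K. avgx_term q s t m n))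
      \<longlonglongrightarrow> (normN q s)\<^sup>2 * (pi\<^sup>2 / 4 / (1 - \<rho>) + 2 * (\<Sum>k. avgx_term q s t 0 (Suc k)))"
    unfolding \<rho>_def by (intro tendsto_mult_left avgx_term_double_sum_tendsto assms)
  with avgx_term_double_sum_tendsto_avgx[OF assms]
  have "avgx q s t = (normN q s)\<^sup>2 * (pi\<^sup>2 / 4 / (1 - \<rho>) + 2 * (\<Sum>k. avgx_term q s t 0 (Suc k)))"
    by (rule LIMSEQ_unique)
  moreover have "(normN q s)\<^sup>2 * (pi\<^sup>2 / 4 / (1 - \<rho>)) = pi / 2"
    unfolding norm_sq using \<rho> by (simp add: field_simps power2_eq_square)
  moreover have "(normN q s)\<^sup>2 * (2 * (\<Sum>k. avgx_term q s t 0 (Suc k))) = - 16 / pi * (1 - \<rho>) * (if even q then S else 0)"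
    by (simp add: norm_sq row)
  ultimately have "avgx q s t = pi / 2 - 16 / pi * (1 - \<rho>) * (if even q then S else 0)"
    by (simp add: distrib_left)
  then show ?thesis
    by (simp only: S_def \<rho>_def)
qed

lemma avgx_has_real_derivative:
  assumes "2 \<le> q" and "s < 2" and "even q"
  shows "(avgx q s has_real_derivative 16 / pi * (1 - real q powr (2 * (s - 2))) *
    (\<Sum>k. real q powr (real (Suc k) * (s - 1)) / (real q ^ (2 * Suc k) - 1)
       * sin ((real q ^ (2 * Suc k) - 1) * t))) (at t)"
proof -
  define \<omega> where "\<omega> k = real q ^ (2 * Suc k) - 1" for k
  define c where "c k = real q powr (real (Suc k) * (s - 1)) / (\<omega> k)\<^sup>2" for k
  have "\<omega> k \<noteq> 0" for k
    using assms(1) one_less_power[of "real q" "2 * Suc k"] by (simp add: \<omega>_def)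
  then have c_times_\<omega>: "c k * \<omega> k = real q powr (real (Suc k) * (s - 1)) / \<omega> k" for k
    by (simp add: c_def power2_eq_square)
  have "summable (\<lambda>k. \<bar>c k\<bar>)"
    unfolding c_def \<omega>_def by (rule summable_powr_div_pow_minus_one_squared) (use assms in auto)
  moreover have "summable (\<lambda>k. \<bar>real q powr (real (Suc k) * (s - 1)) / \<omega> k\<bar>)"
    unfolding \<omega>_def by (rule summable_powr_div_pow_minus_one) (use assms in auto)
  ultimately have "((\<lambda>t. \<Sum>k. c k * cos (\<omega> k * t)) has_real_derivative
      - (\<Sum>k. real q powr (real (Suc k) * (s - 1)) / \<omega> k * sin (\<omega> k * t))) (at t)"
    using has_real_derivative_cos_series[of c \<omega> t] unfolding c_times_\<omega> by blast
  moreover have "avgx q s = (\<lambda>t. pi / 2 - 16 / pi * (1 - real q powr (2 * (s - 2))) * (\<Sum>k. c k * cos (\<omega> k * t)))"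
    using avgx_eq_cos_series[OF assms(1,2)] assms(3) by (simp add: fun_eq_iff c_def \<omega>_def)
  ultimately show ?thesis
    unfolding \<omega>_def by (auto intro!: derivative_eq_intros)
qed

theorem mainTheorem8:
  fixes q :: nat and s :: real
  assumes "q \<ge> 2" and "0 < s" and "s < 2"
  shows "(even q \<longrightarrow>
           (\<forall>t. avgx q s t = pi / 2 - 16 / pi * (1 - real q powr (2 * (s - 2))) *
              (\<Sum>k. real q powr (real (Suc k) * (s - 1)) / (real q ^ (2 * Suc k) - 1)\<^sup>2
                     * cos ((real q ^ (2 * Suc k) - 1) * t)))
         \<and> (\<forall>t. (avgx q s has_real_derivative
              (16 / pi * (1 - real q powr (2 * (s - 2))) *
              (\<Sum>k. real q powr (real (Suc k) * (s - 1)) / (real q ^ (2 * Suc k) - 1)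
                     * sin ((real q ^ (2 * Suc k) - 1) * t)))) (at t))
         \<and> continuous_on UNIV (deriv (avgx q s))
         \<and> (\<forall>t. summable (\<lambda>k. \<bar>real q powr (real (Suc k) * (s - 1)) / (real q ^ (2 * Suc k) - 1)
                     * sin ((real q ^ (2 * Suc k) - 1) * t)\<bar>))
         \<and> uniformly_convergent_on UNIV (\<lambda>n t. \<Sum>k<n. real q powr (real (Suc k) * (s - 1))
                     / (real q ^ (2 * Suc k) - 1) * sin ((real q ^ (2 * Suc k) - 1) * t)))
       \<and> (odd q \<longrightarrow> (\<forall>t. avgx q s t = pi / 2))"
proof -
  define C where "C = 16 / pi * (1 - real q powr (2 * (s - 2)))"
  define \<omega> where "\<omega> k = real q ^ (2 * Suc k) - 1" for k
  define d where "d k = real q powr (real (Suc k) * (s - 1)) / \<omega> k" for k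
  have summable_d: "summable (\<lambda>k. \<bar>d k\<bar>)"
    unfolding d_def \<omega>_def by (rule summable_powr_div_pow_minus_one) (use assms in auto)
  have derivative: "even q \<Longrightarrow> (avgx q s has_real_derivative C * (\<Sum>k. d k * sin (\<omega> k * t))) (at t)" for t
    unfolding C_def d_def \<omega>_def using assms by (intro avgx_has_real_derivative) auto
  have "continuous_on UNIV (\<lambda>t. C * (\<Sum>k. d k * sin (\<omega> k * t)))"
    by (intro continuous_intros continuous_on_sin_series summable_d)
  then have "even q \<Longrightarrow> continuous_on UNIV (deriv (avgx q s))"
    using derivative DERIV_imp_deriv by (metis (no_types, lifting) continuous_on_cong)
  moreover have "summable (\<lambda>k. \<bar>d k * sin (\<omega> k * t)\<bar>)" for t
    by (rule summable_comparison_test'[OF summable_d]) (simp add: abs_mult mult_left_le)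
  moreover have "uniformly_convergent_on UNIV (\<lambda>n t. \<Sum>k<n. d k * sin (\<omega> k * t))"
    by (rule uniformly_convergentI[OF uniform_limit_sin_series[OF summable_d]])
  ultimately show ?thesis
    using avgx_eq_cos_series[OF assms(1,3)] derivative unfolding C_def d_def \<omega>_def by auto
qed

end
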